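(* Let $S$ be the Phillips symmetric operator in $\mathfrak{H}$, let $Q:\mathfrak{N}_i\to\mathfrak{N}_{-i}$ be an arbitrary unitary mapping and let $\Gamma_0,\Gamma_1$ be the associated boundary operators. Then the characteristic function $\Theta(\cdot)$ of $S$ associated with $(\mathfrak{N}_{-i},\Gamma_0,\Gamma_1)$ is identically zero: $\Theta(\mu)=0$ for all $\mu$ with $\operatorname{Im}\mu>0$.
   Context: Phillips symmetric operator: let $U$ be a unitary operator in a Hilbert space $\mathfrak{H}$ which is a bilateral shift with a finite-dimensional wandering subspace $W_0$, i.e. the subspaces $U^nW_0$, $n\in\mathbb{Z}$, are mutually orthogonal and their orthogonal sum is $\mathfrak{H}$. Let $V=U\upharpoonright(\mathfrak{H}\ominus W_0)$ and $S=i(V+I)(V-I)^{-1}$ with $\mathcal{D}(S)=\mathcal{R}(V-I)$; $S$ is a closed densely defined simple symmetric operator with deficiency indices $\langle\dim W_0,\dim W_0\rangle$. Defect subspaces: $\mathfrak{N}_\mu=\mathfrak{H}\ominus\mathcal{R}(S-\mu I)=\ker(S^*-\overline{\mu}I)$; in particular $\mathfrak{N}_{\pm i}$. Every $\psi\in\mathcal{D}(S^* )$ decomposes uniquely as $\psi=u+f_{-i}+f_i$, $u\in\mathcal{D}(S)$, $f_{\pm i}\in\mathfrak{N}_{\pm i}$; for a unitary $Q:\mathfrak{N}_i\to\mathfrak{N}_{-i}$ set $\Gamma_0\psi=f_{-i}+Qf_i$, $\Gamma_1\psi=if_{-i}-iQf_i$. The characteristic function is the operator function on $\mathfrak{N}_{-i}$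 defined for $\operatorname{Im}\mu>0$ by $\Theta(\mu)(\Gamma_1+i\Gamma_0)f=(\Gamma_1-i\Gamma_0)f$ for all $f\in\mathfrak{N}_{\overline{\mu}}$. *)

theory Defs
  imports "HOL-Analysis.Analysis"
begin

class complex_inner = real_normed_vector +
  fixes scaleC :: "complex \<Rightarrow> 'a \<Rightarrow> 'a"
    and cinner :: "'a \<Rightarrow> 'a \<Rightarrow> complex"
  assumes scaleC_of_real: "scaleC (of_real r) x = scaleR r x"
    and scaleC_add_right: "scaleC c (x + y) = scaleC c x + scaleC c y"
    and scaleC_add_left: "scaleC (b + c) x = scaleC b x + scaleC c x"
    and scaleC_scaleC: "scaleC b (scaleC c x) = scaleC (b * c) x"
    and scaleC_one: "scaleC 1 x = x"
    and cinner_commute: "cinner x y = cnj (cinner y x)"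
    and cinner_add_right: "cinner x (y + z) = cinner x y + cinner x z"
    and cinner_scaleC_right: "cinner x (scaleC c y) = c * cinner x y"
    and cinner_self_norm: "cinner x x = complex_of_real ((norm x)\<^sup>2)"

class chilbert = complex_inner + complete_space

definition orth_compl :: "'a::complex_inner set \<Rightarrow> 'a set" where
  "orth_compl A = {x. \<forall>a\<in>A. cinner a x = 0}"

definition csubspace :: "'a::complex_inner set \<Rightarrow> bool" where
  "csubspace M \<longleftrightarrow> 0 \<in> M \<and> (\<forall>x\<in>M. \<forall>y\<in>M. x + y \<in> M) \<and> (\<forall>c. \<forall>x\<in>M. scaleC c x \<in> M)"

definition fin_dim :: "'a::complex_inner set \<Rightarrow> bool" where
  "fin_dim M \<longleftrightarrow> (\<exists>B. finite B \<and> B \<subseteq> M \<and> M \<subseteq> span B)"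

definition clinear_on :: "'a::complex_inner set \<Rightarrow> ('a \<Rightarrow> 'b::complex_inner) \<Rightarrow> bool" where
  "clinear_on M T \<longleftrightarrow> (\<forall>x\<in>M. \<forall>y\<in>M. T (x + y) = T x + T y) \<and> (\<forall>c. \<forall>x\<in>M. T (scaleC c x) = scaleC c (T x))"

definition unitary :: "('a::complex_inner \<Rightarrow> 'a) \<Rightarrow> bool" where
  "unitary U \<longleftrightarrow> clinear_on UNIV U \<and> bij U \<and> (\<forall>x y. cinner (U x) (U y) = cinner x y)"

definition unitary_between :: "('a::complex_inner \<Rightarrow> 'a) \<Rightarrow> 'a set \<Rightarrow> 'a set \<Rightarrow> bool" where
  "unitary_between Q M N \<longleftrightarrow> clinear_on M Q \<and> bij_betw Q M N \<and>
     (\<forall>x\<in>M. \<forall>y\<in>M. cinner (Q x) (Q y) = cinner x y)"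

definition Upow :: "('a \<Rightarrow> 'a) \<Rightarrow> int \<Rightarrow> 'a \<Rightarrow> 'a" where
  "Upow U n = (if 0 \<le> n then U ^^ nat n else inv U ^^ nat (- n))"

definition bilateral_shift :: "('a::chilbert \<Rightarrow> 'a) \<Rightarrow> 'a set \<Rightarrow> bool" where
  "bilateral_shift U W0 \<longleftrightarrow> unitary U \<and> csubspace W0 \<and> fin_dim W0 \<and>
     (\<forall>m n. m \<noteq> n \<longrightarrow> (\<forall>x\<in>W0. \<forall>y\<in>W0. cinner (Upow U m x) (Upow U n y) = 0)) \<and>
     closure (span (\<Union>n. Upow U n ` W0)) = UNIV"

text \<open>Phillips symmetric operator \<open>S = i(V+I)(V-I)^{-1}\<close>, \<open>V = U\<restriction>(H \<ominus> W0)\<close>,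
  \<open>D(S) = R(V - I)\<close>, given by its graph.\<close>
definition phillips_graph :: "('a::chilbert \<Rightarrow> 'a) \<Rightarrow> 'a set \<Rightarrow> ('a \<times> 'a) set" where
  "phillips_graph U W0 = {(U g - g, scaleC \<i> (U g + g)) | g. g \<in> orth_compl W0}"

definition op_dom :: "('a \<times> 'a) set \<Rightarrow> 'a set" where
  "op_dom G = fst ` G"

text \<open>Defect subspace \<open>N_\<mu> = H \<ominus> R(S - \<mu> I)\<close>.\<close>
definition defect :: "('a::complex_inner \<times> 'a) set \<Rightarrow> complex \<Rightarrow> 'a set" where
  "defect G \<mu> = orth_compl {v - scaleC \<mu> u | u v. (u, v) \<in> G}"

text \<open>The (unique) decomposition \<open>\<psi> = u + f_{-i} + f_i\<close> of \<open>\<psi> \<in> D(S^*)\<close>.\<close>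
definition decomp :: "('a::complex_inner \<times> 'a) set \<Rightarrow> 'a \<Rightarrow> 'a \<times> 'a \<times> 'a" where
  "decomp G \<psi> = (THE (u, fm, fp). u \<in> op_dom G \<and> fm \<in> defect G (- \<i>) \<and> fp \<in> defect G \<i>
                     \<and> \<psi> = u + fm + fp)"

definition Gamma0 :: "('a::complex_inner \<times> 'a) set \<Rightarrow> ('a \<Rightarrow> 'a) \<Rightarrow> 'a \<Rightarrow> 'a" where
  "Gamma0 G Q \<psi> = (case decomp G \<psi> of (u, fm, fp) \<Rightarrow> fm + Q fp)"

definition Gamma1 :: "('a::complex_inner \<times> 'a) set \<Rightarrow> ('a \<Rightarrow> 'a) \<Rightarrow> 'a \<Rightarrow> 'a" where
  "Gamma1 G Q \<psi> = (case decomp G \<psi> of (u, fm, fp) \<Rightarrow> scaleC \<i> fm - scaleC \<i> (Q fp))"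

definition char_fun :: "('a::complex_inner \<times> 'a) set \<Rightarrow> ('a \<Rightarrow> 'a) \<Rightarrow> complex \<Rightarrow> 'a \<Rightarrow> 'a" where
  "char_fun G Q \<mu> x = (SOME y. \<exists>f \<in> defect G (cnj \<mu>).
       x = Gamma1 G Q f + scaleC \<i> (Gamma0 G Q f) \<and> y = Gamma1 G Q f - scaleC \<i> (Gamma0 G Q f))"

end

theory Submission imports Defs begin

text \<open>
  Fix \<open>Im \<mu> > 0\<close>. Every \<open>f \<in> N(cnj \<mu>)\<close> is orthogonal to the wandering subspace \<open>W0\<close>:
  for \<open>w \<in> W0\<close> the coefficients \<open>c k = \<langle>U^(-k) w, f\<rangle>\<close> satisfy
  \<open>(\<mu> + \<i>) c k = (\<mu> - \<i>) c (k + 1)\<close> with \<open>|\<mu> - \<i>| < |\<mu> + \<i>|\<close>, so \<open>|c k|\<close> is non-decreasing,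
  which Bessel's inequality for the orthogonal family \<open>U^(-k) w\<close> only allows if \<open>c 0 = 0\<close>.
  Hence \<open>g = \<lambda> f\<close> with \<open>\<lambda> = (\<mu> - \<i>) / (2\<i>)\<close> lies in \<open>H \<ominus> W0\<close>, and
  \<open>f = (U g - g) + ((1 + \<lambda>) f - \<lambda> U f)\<close> is the decomposition of \<open>f\<close> along
  \<open>D(S) \<dotplus> N(-\<i>) \<dotplus> N(\<i>)\<close>, with zero component in \<open>N(\<i>)\<close>. Therefore \<open>\<Gamma>1 f = \<i> \<Gamma>0 f\<close>: the
  right-hand side \<open>(\<Gamma>1 - \<i>\<Gamma>0) f\<close> of the relation defining \<open>\<Theta>(\<mu>)\<close> always vanishes, while a
  Neumann series for \<open>(1 + \<lambda>) I - \<lambda> U\<close> shows that the left-hand side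
  \<open>(\<Gamma>1 + \<i>\<Gamma>0) f = 2\<i> ((1 + \<lambda>) f - \<lambda> U f)\<close> ranges over all of \<open>N(-\<i>)\<close>.
\<close>

context chilbert begin
subclass banach ..
end

lemma scaleC_zero_left [simp]: "scaleC 0 x = (0::'a::complex_inner)"
  using scaleC_of_real[of 0 x] by simp

lemma scaleC_zero_right [simp]: "scaleC c (0::'a::complex_inner) = 0"
  using scaleC_add_right[of c 0 0] by simp

lemma scaleC_minus_one: "scaleC (-1) x = - (x::'a::complex_inner)"
  using scaleC_of_real[of "-1" x] by simp

lemma scaleC_minus_right: "scaleC c (- x) = - scaleC c (x::'a::complex_inner)"
  by (metis scaleC_minus_one scaleC_scaleC mult.commute)

lemma scaleC_diff_right: "scaleC c (x - y) = scaleC c x - scaleC c (y::'a::complex_inner)"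
  by (simp only: diff_conv_add_uminus scaleC_add_right scaleC_minus_right)

lemma scaleC_scaleR: "scaleC c (scaleR r x) = scaleR r (scaleC c (x::'a::complex_inner))"
  by (metis scaleC_of_real scaleC_scaleC mult.commute)

lemma cinner_zero_right [simp]: "cinner x (0::'a::complex_inner) = 0"
  using cinner_add_right[of x 0 0] by simp

lemma cinner_zero_left [simp]: "cinner (0::'a::complex_inner) x = 0"
  by (metis cinner_commute cinner_zero_right complex_cnj_zero)

lemma cinner_add_left: "cinner (x + y) z = cinner x z + cinner y (z::'a::complex_inner)"
  by (metis cinner_commute cinner_add_right complex_cnj_add)

lemma cinner_scaleC_left: "cinner (scaleC c x) y = cnj c * cinner x (y::'a::complex_inner)"
  by (metis cinner_commute cinner_scaleC_right complex_cnj_mult)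

lemma cinner_minus_right: "cinner x (- y) = - cinner x (y::'a::complex_inner)"
  using cinner_scaleC_right[of x "-1" y] by (simp add: scaleC_minus_one)

lemma cinner_minus_left: "cinner (- x) y = - cinner x (y::'a::complex_inner)"
  by (metis cinner_commute cinner_minus_right complex_cnj_minus)

lemma cinner_diff_right: "cinner x (y - z) = cinner x y - cinner x (z::'a::complex_inner)"
  by (simp only: diff_conv_add_uminus cinner_add_right cinner_minus_right)

lemma cinner_diff_left: "cinner (x - y) z = cinner x z - cinner y (z::'a::complex_inner)"
  by (simp only: diff_conv_add_uminus cinner_add_left cinner_minus_left)

lemma cinner_self_eq_0_iff: "cinner x x = 0 \<longleftrightarrow> x = (0::'a::complex_inner)"
  by (simp add: cinner_self_norm)

lemma cinner_sum_right: "cinner x (sum f A) = (\<Sum>a\<in>A. cinner x (f a::'a::complex_inner))"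
  by (induction A rule: infinite_finite_induct) (auto simp: cinner_add_right)

lemma norm_eq_if_cinner_self_eq:
  "cinner x x = cinner y y \<Longrightarrow> norm x = norm (y::'a::complex_inner)"
  by (metis cinner_self_norm of_real_eq_iff norm_ge_zero power2_eq_iff_nonneg)

lemma norm_scaleC: "norm (scaleC c x) = cmod c * norm (x::'a::complex_inner)"
proof -
  have "complex_of_real ((norm (scaleC c x))\<^sup>2) = (c * cnj c) * complex_of_real ((norm x)\<^sup>2)"
    by (simp only: cinner_self_norm[symmetric] cinner_scaleC_left cinner_scaleC_right)
       (simp add: algebra_simps)
  also have "\<dots> = complex_of_real ((cmod c * norm x)\<^sup>2)"
    by (simp only: complex_norm_square[symmetric] of_real_mult[symmetric] power_mult_distrib)
  finally have "(norm (scaleC c x))\<^sup>2 = (cmod c * norm x)\<^sup>2"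
    by (simp only: of_real_eq_iff)
  then show ?thesis by (rule power2_eq_imp_eq) simp_all
qed

lemma bounded_linear_scaleC: "bounded_linear (scaleC c :: 'a::complex_inner \<Rightarrow> 'a)"
  by (rule bounded_linear_intro[where K = "cmod c"])
     (auto simp: scaleC_add_right scaleC_scaleR norm_scaleC mult.commute)

lemma cinner_remove_component:
  assumes "cinner e e = 1"
  shows "cinner (x - scaleC (cinner e x) e) (x - scaleC (cinner e x) e)
           = cinner x x - cinner e x * cnj (cinner e x)"
  using assms cinner_commute[of x e]
  by (simp add: cinner_diff_left cinner_diff_right cinner_scaleC_left cinner_scaleC_right
      algebra_simps)

lemma bessel_inequality:
  fixes e :: "nat \<Rightarrow> 'a::complex_inner"
  assumes orth: "\<And>j k. j \<noteq> k \<Longrightarrow> cinner (e j) (e k) = 0" and unit: "\<And>k. norm (e k) = 1"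
  shows "(\<Sum>k<N. (cmod (cinner (e k) f))\<^sup>2) \<le> (norm f)\<^sup>2"
proof -
  define r where "r N = f - (\<Sum>k<N. scaleC (cinner (e k) f) (e k))" for N
  have "cinner (r N) (r N) = complex_of_real ((norm f)\<^sup>2 - (\<Sum>k<N. (cmod (cinner (e k) f))\<^sup>2))"
  proof (induction N)
    case 0
    show ?case by (simp add: r_def cinner_self_norm)
  next
    case (Suc N)
    have "cinner (e N) (r N) = cinner (e N) f"
      by (simp add: r_def cinner_diff_right cinner_sum_right cinner_scaleC_right orth)
    moreover have "r (Suc N) = r N - scaleC (cinner (e N) f) (e N)"
      by (simp add: r_def)
    moreover have "cinner (e N) (e N) = 1"
      using cinner_self_norm[of "e N"] unit by simp
    ultimately show ?case
      using cinner_remove_component[of "e N" "r N"] Suc.IH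
      by (simp add: complex_norm_square[symmetric])
  qed
  then have "(norm (r N))\<^sup>2 = (norm f)\<^sup>2 - (\<Sum>k<N. (cmod (cinner (e k) f))\<^sup>2)"
    by (simp only: cinner_self_norm of_real_eq_iff)
  then show ?thesis
    by (metis diff_ge_0_iff_ge zero_le_power2)
qed

text \<open>By Bessel's inequality the coefficients along an orthogonal family of constant
  norm tend to zero.\<close>

lemma orthogonal_coeffs_nondecreasing_imp_zero:
  fixes e :: "nat \<Rightarrow> 'a::complex_inner"
  assumes orth: "\<And>j k. j \<noteq> k \<Longrightarrow> cinner (e j) (e k) = 0" and nrm: "\<And>k. norm (e k) = r"
    and mono: "\<And>k. cmod (cinner (e k) f) \<le> cmod (cinner (e (Suc k)) f)"
  shows "cinner (e 0) f = 0"
proof (cases "r = 0")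
  case True
  then show ?thesis using nrm[of 0] by simp
next
  case False
  then have "r > 0" using nrm[of 0] by (metis norm_ge_zero order_le_less)
  define e' where "e' k = scaleC (complex_of_real (1 / r)) (e k)" for k
  define t where "t = cmod (cinner (e 0) f) / r"
  have "t \<le> cmod (cinner (e' k) f)" for k
  proof -
    have "cmod (cinner (e 0) f) \<le> cmod (cinner (e k) f)"
      using incseqD[OF incseq_SucI[of "\<lambda>k. cmod (cinner (e k) f)", OF mono]] by simp
    then show ?thesis
      using \<open>r > 0\<close> by (simp add: t_def e'_def cinner_scaleC_left norm_mult norm_divide divide_right_mono)
  qed
  then have "t\<^sup>2 \<le> (cmod (cinner (e' k) f))\<^sup>2" for k
    using \<open>r > 0\<close> by (simp add: t_def power_mono)
  moreover have "(\<Sum>k<N. (cmod (cinner (e' k) f))\<^sup>2) \<le> (norm f)\<^sup>2" for N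
    using \<open>r > 0\<close>
    by (intro bessel_inequality)
       (simp_all add: e'_def cinner_scaleC_left cinner_scaleC_right norm_scaleC nrm orth norm_divide)
  ultimately have bound: "real N * t\<^sup>2 \<le> (norm f)\<^sup>2" for N
    using sum_mono[of "{..<N}" "\<lambda>_. t\<^sup>2" "\<lambda>k. (cmod (cinner (e' k) f))\<^sup>2"]
    by (simp add: order_trans)
  have "t = 0"
  proof (rule ccontr)
    assume "t \<noteq> 0"
    then have "t\<^sup>2 > 0" by simp
    moreover obtain N where "(norm f)\<^sup>2 / t\<^sup>2 < real N" using reals_Archimedean2 by blast
    ultimately show False using bound[of N] by (simp add: divide_less_eq)
  qed
  then show ?thesis using \<open>r > 0\<close> by (simp add: t_def)
qed

lemma cinner_funpow_isometry:
  fixes T :: "'a::complex_inner \<Rightarrow> 'a"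
  assumes iso: "\<And>x y. cinner (T x) (T y) = cinner x y"
  shows "cinner ((T ^^ k) x) ((T ^^ k) y) = cinner x y"
  by (induction k) (simp_all add: iso)

lemma orth_compl_diff: "x \<in> orth_compl A \<Longrightarrow> y \<in> orth_compl A \<Longrightarrow> x - y \<in> orth_compl A"
  by (simp add: orth_compl_def cinner_diff_right)

lemma unitary_between_zero:
  assumes "unitary_between Q M N" and "(0::'a::complex_inner) \<in> M"
  shows "Q 0 = 0"
  using assms scaleC_zero_left[of "Q 0"] scaleC_zero_left[of "0::'a"]
  unfolding unitary_between_def clinear_on_def by metis

lemma cmod_diff_i_less_cmod_add_i: "Im \<mu> > 0 \<Longrightarrow> cmod (\<mu> - \<i>) < cmod (\<mu> + \<i>)"
  by (rule power2_less_imp_less) (simp_all only: cmod_power2, simp_all add: power2_eq_square algebra_simps)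

lemma char_fun_eq_0I:
  assumes "\<And>f. f \<in> defect G (cnj \<mu>) \<Longrightarrow> Gamma1 G Q f = scaleC \<i> (Gamma0 G Q f)"
    and "\<exists>f\<in>defect G (cnj \<mu>). x = Gamma1 G Q f + scaleC \<i> (Gamma0 G Q f)"
  shows "char_fun G Q \<mu> x = 0"
  unfolding char_fun_def by (rule someI2_ex) (use assms in auto)

text \<open>\<open>\<lambda>\<close> is chosen so that \<open>f = (U(\<lambda>f) - \<lambda>f) + ((1 + \<lambda>) f - \<lambda> U f)\<close> splits
  \<open>f \<in> N\<^sub>c\<^sub>n\<^sub>j \<^sub>\<mu>\<close> into its parts in \<open>D(S)\<close> and \<open>N\<^sub>-\<^sub>\<i>\<close>.\<close>

definition splitting_coeff :: "complex \<Rightarrow> complex" where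
  "splitting_coeff \<mu> = (\<mu> - \<i>) / (2 * \<i>)"

lemma splitting_coeff_identity:
  "(- \<i> - \<mu>) * a + (\<mu> - \<i>) * b
     = - (2 * \<i>) * ((1 + splitting_coeff \<mu>) * a - splitting_coeff \<mu> * b)"
  by (simp add: splitting_coeff_def field_simps)

locale phillips =
  fixes U :: "'a::chilbert \<Rightarrow> 'a" and W0 :: "'a set"
  assumes shift: "bilateral_shift U W0"
begin

abbreviation S :: "('a \<times> 'a) set" where "S \<equiv> phillips_graph U W0"

lemma unitary_U: "unitary U"
  using shift by (simp add: bilateral_shift_def)

lemma U_add: "U (x + y) = U x + U y"
  using unitary_U by (simp add: unitary_def clinear_on_def)

lemma U_scaleC: "U (scaleC c x) = scaleC c (U x)"
  using unitary_U by (simp add: unitary_def clinear_on_def)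

lemma cinner_U_U: "cinner (U x) (U y) = cinner x y"
  using unitary_U by (simp add: unitary_def)

lemma U_inv: "U (inv U x) = x"
  using unitary_U by (simp add: unitary_def bij_is_surj surj_f_inv_f)

lemma cinner_inv_U_inv_U: "cinner (inv U x) (inv U y) = cinner x y"
  by (metis cinner_U_U U_inv)

lemma U_diff: "U (x - y) = U x - U y"
  by (metis U_add U_scaleC scaleC_minus_one diff_conv_add_uminus)

lemma bounded_linear_U: "bounded_linear U"
proof (rule bounded_linear_intro[where K = 1])
  show "U (scaleR r x) = scaleR r (U x)" for r x
    by (simp only: scaleC_of_real[symmetric] U_scaleC)
  show "norm (U x) \<le> norm x * 1" for x
    using norm_eq_if_cinner_self_eq[OF cinner_U_U] by simp
qed (rule U_add)

lemma U_Upow: "U (Upow U n x) = Upow U (n + 1) x"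
proof (cases "0 \<le> n")
  case True
  then have "nat (n + 1) = Suc (nat n)" by simp
  with True show ?thesis by (simp add: Upow_def)
next
  case False
  then have "Upow U (n + 1) x = (inv U ^^ nat (- (n + 1))) x"
    by (auto simp: Upow_def)
  moreover have "nat (- n) = Suc (nat (- (n + 1)))" using False by simp
  ultimately show ?thesis using False by (simp add: Upow_def U_inv)
qed

lemma cinner_Upow_Upow: "cinner (Upow U n x) (Upow U n y) = cinner x y"
  by (simp add: Upow_def cinner_funpow_isometry cinner_U_U cinner_inv_U_inv_U)

lemma Upow_wandering_orthogonal:
  "m \<noteq> n \<Longrightarrow> x \<in> W0 \<Longrightarrow> y \<in> W0 \<Longrightarrow> cinner (Upow U m x) (Upow U n y) = 0"
  using shift by (simp add: bilateral_shift_def)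

lemma Upow_wandering_in_orth_compl: "n \<noteq> 0 \<Longrightarrow> w \<in> W0 \<Longrightarrow> Upow U n w \<in> orth_compl W0"
  using Upow_wandering_orthogonal[of 0 n] by (auto simp: orth_compl_def Upow_def)

lemma wandering_coeff_zero:
  assumes w: "w \<in> W0" and "s \<noteq> 0"
    and mono: "\<And>k. cmod (cinner (Upow U (m + s * int k) w) f)
                    \<le> cmod (cinner (Upow U (m + s * int (Suc k)) w) f)"
  shows "cinner (Upow U m w) f = 0"
  using orthogonal_coeffs_nondecreasing_imp_zero[where e = "\<lambda>k. Upow U (m + s * int k) w"
      and r = "norm w" and f = f] mono \<open>s \<noteq> 0\<close>
    Upow_wandering_orthogonal[OF _ w w] norm_eq_if_cinner_self_eq[OF cinner_Upow_Upow]
  by simp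

lemma defect_iff:
  "x \<in> defect S c \<longleftrightarrow>
     (\<forall>g\<in>orth_compl W0. (- \<i> - cnj c) * cinner (U g) x + (cnj c - \<i>) * cinner g x = 0)"
proof -
  have "{v - scaleC c u | u v. (u, v) \<in> S}
          = (\<lambda>g. scaleC \<i> (U g + g) - scaleC c (U g - g)) ` orth_compl W0"
    by (auto simp: phillips_graph_def)
  moreover have "cinner (scaleC \<i> (U g + g) - scaleC c (U g - g)) x
                   = (- \<i> - cnj c) * cinner (U g) x + (cnj c - \<i>) * cinner g x" for g
    by (simp add: cinner_diff_left cinner_add_left cinner_scaleC_left algebra_simps)
  ultimately show ?thesis
    by (simp add: defect_def orth_compl_def)
qed

lemma defect_minus_i_iff: "x \<in> defect S (- \<i>) \<longleftrightarrow> (\<forall>g\<in>orth_compl W0. cinner (U g) x = 0)"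
  by (simp add: defect_iff)

lemma defect_i_iff: "x \<in> defect S \<i> \<longleftrightarrow> (\<forall>g\<in>orth_compl W0. cinner g x = 0)"
  by (simp add: defect_iff)

lemma defect_diff: "x \<in> defect S c \<Longrightarrow> y \<in> defect S c \<Longrightarrow> x - y \<in> defect S c"
  unfolding defect_def by (rule orth_compl_diff)

lemma op_dom_phillips: "op_dom S = {U g - g | g. g \<in> orth_compl W0}"
  by (auto simp: op_dom_def phillips_graph_def image_def)

text \<open>Pairing the relation with \<open>U^(n+1) w\<close>, \<open>n \<notin> {0, -1}\<close>, kills \<open>a\<close> and \<open>b\<close>, so the
  coefficients of \<open>g\<close> along each half of the orbit of \<open>w\<close> are constant and hence zero.\<close>

lemma domain_part_orthogonal_to_orbit:
  assumes g: "g \<in> orth_compl W0" and a: "a \<in> defect S (- \<i>)" and b: "b \<in> defect S \<i>"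
    and sum: "U g - g + a + b = 0" and w: "w \<in> W0"
  shows "cinner (U w) g = 0" and "cinner (inv U w) g = 0"
proof -
  have step: "cinner (Upow U n w) g = cinner (Upow U (n + 1) w) g" if "n \<noteq> 0" "n + 1 \<noteq> 0" for n
  proof -
    let ?z = "Upow U (n + 1) w"
    have "cinner ?z (U g - g + a + b) = 0" using sum by simp
    moreover have "cinner ?z (U g) = cinner (Upow U n w) g"
      by (metis U_Upow cinner_U_U)
    moreover have "cinner ?z a = 0"
      using a Upow_wandering_in_orth_compl[OF that(1) w] U_Upow[of n w]
      by (metis defect_minus_i_iff)
    moreover have "cinner ?z b = 0"
      using b Upow_wandering_in_orth_compl[OF that(2) w] defect_i_iff by blast
    ultimately show ?thesis by (simp add: cinner_add_right cinner_diff_right)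
  qed
  have "cinner (Upow U 1 w) g = 0"
  proof (rule wandering_coeff_zero[OF w, where s = 1])
    fix k :: nat
    have "1 + 1 * int (Suc k) = (1 + int k) + 1" by simp
    then show "cmod (cinner (Upow U (1 + 1 * int k) w) g)
                 \<le> cmod (cinner (Upow U (1 + 1 * int (Suc k)) w) g)"
      using step[of "1 + int k"] by simp
  qed simp
  then show "cinner (U w) g = 0" by (simp add: Upow_def)
  have "cinner (Upow U (- 1) w) g = 0"
  proof (rule wandering_coeff_zero[OF w, where s = "- 1"])
    fix k :: nat
    have "- 1 + - 1 * int k = (- 1 + - 1 * int (Suc k)) + 1" by simp
    then show "cmod (cinner (Upow U (- 1 + - 1 * int k) w) g)
                 \<le> cmod (cinner (Upow U (- 1 + - 1 * int (Suc k)) w) g)"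
      using step[of "- 1 + - 1 * int (Suc k)"] by simp
  qed simp
  then show "cinner (inv U w) g = 0" by (simp add: Upow_def)
qed

lemma defect_parts_zero:
  assumes g: "g \<in> orth_compl W0" and a: "a \<in> defect S (- \<i>)" and b: "b \<in> defect S \<i>"
    and sum: "U g - g + a + b = 0"
  shows "a = 0" and "b = 0"
proof -
  have expand: "cinner z (U g) - cinner z g + cinner z a + cinner z b = 0" for z
    using arg_cong[OF sum, of "cinner z"] by (simp add: cinner_add_right cinner_diff_right)
  have g_perp: "cinner w g = 0" if "w \<in> W0" for w
    using g that by (simp add: orth_compl_def)
  have "inv U a \<in> orth_compl W0"
  proof -
    have "cinner (U w) a = 0" if w: "w \<in> W0" for w
    proof -
      have "cinner (U w) b = 0"
        using b Upow_wandering_in_orth_compl[of 1 w] w by (simp add: defect_i_iff Upow_def)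
      then show ?thesis
        using expand[of "U w"] domain_part_orthogonal_to_orbit(1)[OF g a b sum w] g_perp[OF w]
        by (simp add: cinner_U_U)
    qed
    then show ?thesis
      by (simp add: orth_compl_def) (metis U_inv cinner_U_U)
  qed
  then show "a = 0"
    using a by (metis defect_minus_i_iff U_inv cinner_self_eq_0_iff)
  have "b \<in> orth_compl W0"
  proof -
    have "cinner w b = 0" if w: "w \<in> W0" for w
    proof -
      have "inv U w \<in> orth_compl W0"
        using Upow_wandering_in_orth_compl[of "- 1" w] w by (simp add: Upow_def)
      then have "cinner w a = 0"
        using a U_inv[of w] by (metis defect_minus_i_iff)
      moreover have "cinner w (U g) = 0"
        using domain_part_orthogonal_to_orbit(2)[OF g a b sum w] cinner_U_U[of "inv U w" g]
        by (simp add: U_inv)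
      ultimately show ?thesis using expand[of w] g_perp[OF w] by simp
    qed
    then show ?thesis by (simp add: orth_compl_def)
  qed
  then show "b = 0"
    using b by (metis defect_i_iff cinner_self_eq_0_iff)
qed

lemma decomp_eqI:
  assumes "u \<in> op_dom S" and "fm \<in> defect S (- \<i>)" and "fp \<in> defect S \<i>"
    and "\<psi> = u + fm + fp"
  shows "decomp S \<psi> = (u, fm, fp)"
  unfolding decomp_def
proof (rule the_equality)
  show "case (u, fm, fp) of (u, fm, fp) \<Rightarrow>
          u \<in> op_dom S \<and> fm \<in> defect S (- \<i>) \<and> fp \<in> defect S \<i> \<and> \<psi> = u + fm + fp"
    using assms by simp
next
  fix d
  assume "case d of (u', fm', fp') \<Rightarrow>
            u' \<in> op_dom S \<and> fm' \<in> defect S (- \<i>) \<and> fp' \<in> defect S \<i> \<and> \<psi> = u' + fm' + fp'"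
  then obtain u' fm' fp' where d: "d = (u', fm', fp')" and "u' \<in> op_dom S"
    and fm': "fm' \<in> defect S (- \<i>)" and fp': "fp' \<in> defect S \<i>" and \<psi>': "\<psi> = u' + fm' + fp'"
    by auto
  obtain g g' where g: "g \<in> orth_compl W0" "u = U g - g" and g': "g' \<in> orth_compl W0" "u' = U g' - g'"
    using assms(1) \<open>u' \<in> op_dom S\<close> by (auto simp: op_dom_phillips)
  have "U (g' - g) - (g' - g) + (fm' - fm) + (fp' - fp) = 0"
    using assms(4) \<psi>' g g' by (simp add: U_diff algebra_simps)
  from defect_parts_zero[OF orth_compl_diff[OF g'(1) g(1)] defect_diff[OF fm' assms(2)]
      defect_diff[OF fp' assms(3)] this]
  show "d = (u, fm, fp)" using assms(4) \<psi>' d by simp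
qed

lemma defect_conj_orthogonal_wandering:
  assumes mu: "Im \<mu> > 0" and f: "f \<in> defect S (cnj \<mu>)" and w: "w \<in> W0"
  shows "cinner w f = 0"
proof -
  define c where "c k = cinner (Upow U (- int k) w) f" for k
  have rel: "(\<mu> + \<i>) * c k = (\<mu> - \<i>) * c (Suc k)" for k
  proof -
    have "Upow U (- int (Suc k)) w \<in> orth_compl W0"
      using Upow_wandering_in_orth_compl w by simp
    then have "(- \<i> - \<mu>) * cinner (U (Upow U (- int (Suc k)) w)) f + (\<mu> - \<i>) * c (Suc k) = 0"
      using f unfolding defect_iff complex_cnj_cnj c_def by blast
    then have "(- \<i> - \<mu>) * c k + (\<mu> - \<i>) * c (Suc k) = 0"
      by (simp add: U_Upow c_def)
    then show ?thesis by (simp add: algebra_simps add_eq_0_iff)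
  qed
  have "cmod (c k) \<le> cmod (c (Suc k))" for k
  proof -
    have "cmod (\<mu> + \<i>) * cmod (c k) = cmod (\<mu> - \<i>) * cmod (c (Suc k))"
      using rel[of k] by (metis norm_mult)
    also have "\<dots> \<le> cmod (\<mu> + \<i>) * cmod (c (Suc k))"
      using cmod_diff_i_less_cmod_add_i[OF mu] by (intro mult_right_mono) auto
    finally have "cmod (\<mu> + \<i>) * cmod (c k) \<le> cmod (\<mu> + \<i>) * cmod (c (Suc k))" .
    moreover have "0 < cmod (\<mu> + \<i>)"
      using cmod_diff_i_less_cmod_add_i[OF mu] norm_ge_zero by (rule le_less_trans[rotated])
    ultimately show ?thesis by (metis mult_le_cancel_left_pos)
  qed
  then have "cinner (Upow U 0 w) f = 0"
    by (intro wandering_coeff_zero[OF w, where s = "- 1"]) (simp_all add: c_def)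
  then show ?thesis by (simp add: Upow_def)
qed

lemma defect_conj_iff:
  "f \<in> defect S (cnj \<mu>) \<longleftrightarrow>
     scaleC (1 + splitting_coeff \<mu>) f - scaleC (splitting_coeff \<mu>) (U f) \<in> defect S (- \<i>)"
proof -
  have "cinner (U g) (scaleC (1 + splitting_coeff \<mu>) f - scaleC (splitting_coeff \<mu>) (U f))
          = (1 + splitting_coeff \<mu>) * cinner (U g) f - splitting_coeff \<mu> * cinner g f" for g
    by (simp add: cinner_diff_right cinner_scaleC_right cinner_U_U)
  then show ?thesis
    unfolding defect_iff[of f] defect_minus_i_iff complex_cnj_cnj splitting_coeff_identity
    by simp
qed

lemma defect_minus_i_scaleC: "x \<in> defect S (- \<i>) \<Longrightarrow> scaleC c x \<in> defect S (- \<i>)"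
  by (simp add: defect_minus_i_iff cinner_scaleC_right)

lemma decomp_defect_conj:
  assumes "Im \<mu> > 0" and "f \<in> defect S (cnj \<mu>)"
  defines "l \<equiv> splitting_coeff \<mu>"
  shows "decomp S f = (U (scaleC l f) - scaleC l f, scaleC (1 + l) f - scaleC l (U f), 0)"
proof (rule decomp_eqI)
  have "scaleC l f \<in> orth_compl W0"
    using defect_conj_orthogonal_wandering[OF assms(1,2)]
    by (simp add: orth_compl_def cinner_scaleC_right)
  then show "U (scaleC l f) - scaleC l f \<in> op_dom S"
    by (auto simp: op_dom_phillips)
  show "scaleC (1 + l) f - scaleC l (U f) \<in> defect S (- \<i>)"
    using assms(2) by (simp add: l_def defect_conj_iff)
  show "0 \<in> defect S \<i>"
    by (simp add: defect_i_iff)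
  show "f = U (scaleC l f) - scaleC l f + (scaleC (1 + l) f - scaleC l (U f)) + 0"
    by (simp add: U_scaleC scaleC_add_left scaleC_one)
qed

lemma Gamma_defect_conj:
  assumes "Q 0 = 0" and "Im \<mu> > 0" and "f \<in> defect S (cnj \<mu>)"
  defines "l \<equiv> splitting_coeff \<mu>"
  shows "Gamma0 S Q f = scaleC (1 + l) f - scaleC l (U f)"
    and "Gamma1 S Q f = scaleC \<i> (Gamma0 S Q f)"
  using decomp_defect_conj[OF assms(2,3)] assms(1)
  by (simp_all add: Gamma0_def Gamma1_def l_def)

lemma neumann_series_solution:
  assumes "cmod \<zeta> < 1"
  shows "\<exists>f. f - scaleC \<zeta> (U f) = y"
proof
  define t where "t n = scaleC (\<zeta> ^ n) ((U ^^ n) y)" for n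
  have "norm ((U ^^ n) y) = norm y" for n
    by (rule norm_eq_if_cinner_self_eq) (rule cinner_funpow_isometry[OF cinner_U_U])
  then have "norm (t n) = cmod \<zeta> ^ n * norm y" for n
    by (simp add: t_def norm_scaleC norm_power)
  then have "summable (\<lambda>n. norm (t n))"
    using assms by (simp add: summable_mult2)
  then have t: "summable t" by (rule summable_norm_cancel)
  then have Ut: "summable (\<lambda>n. U (t n))" by (rule bounded_linear.summable[OF bounded_linear_U])
  have "scaleC \<zeta> (U (suminf t)) = (\<Sum>n. scaleC \<zeta> (U (t n)))"
    by (simp only: bounded_linear.suminf[OF bounded_linear_U t]
        bounded_linear.suminf[OF bounded_linear_scaleC Ut])
  also have "\<dots> = (\<Sum>n. t (Suc n))"
    by (simp add: t_def U_scaleC scaleC_scaleC)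
  also have "\<dots> = suminf t - t 0"
    by (rule suminf_split_head[OF t])
  finally show "suminf t - scaleC \<zeta> (U (suminf t)) = y"
    by (simp add: t_def scaleC_one)
qed

lemma splitting_surjective:
  assumes "Im \<mu> > 0"
  defines "l \<equiv> splitting_coeff \<mu>"
  shows "\<exists>f. scaleC (1 + l) f - scaleC l (U f) = y"
proof -
  have "\<mu> + \<i> \<noteq> 0" using assms(1) by (auto simp: complex_eq_iff)
  then have l: "1 + l = (\<mu> + \<i>) / (2 * \<i>)" "1 + l \<noteq> 0"
    by (simp_all add: l_def splitting_coeff_def field_simps)
  have "cmod (l / (1 + l)) < 1"
    using l cmod_diff_i_less_cmod_add_i[OF assms(1)]
    by (simp add: l_def splitting_coeff_def norm_divide divide_less_eq)
  then obtain f where "f - scaleC (l / (1 + l)) (U f) = scaleC (1 / (1 + l)) y"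
    using neumann_series_solution by blast
  then have "scaleC (1 + l) (f - scaleC (l / (1 + l)) (U f)) = y"
    using l(2) by (simp add: scaleC_scaleC scaleC_one)
  then show ?thesis
    using l(2) by (auto simp: scaleC_diff_right scaleC_scaleC)
qed

theorem char_fun_eq_0:
  assumes Q: "unitary_between Q (defect S \<i>) (defect S (- \<i>))"
    and mu: "Im \<mu> > 0" and x: "x \<in> defect S (- \<i>)"
  shows "char_fun S Q \<mu> x = 0"
proof (rule char_fun_eq_0I)
  have Q0: "Q 0 = 0" using unitary_between_zero[OF Q] by (simp add: defect_i_iff)
  then show "Gamma1 S Q f = scaleC \<i> (Gamma0 S Q f)" if "f \<in> defect S (cnj \<mu>)" for f
    using Gamma_defect_conj[OF _ mu that] by simp
  define l where "l = splitting_coeff \<mu>"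
  define y where "y = scaleC (1 / (2 * \<i>)) x"
  have x_y: "x = scaleC \<i> y + scaleC \<i> y"
    unfolding y_def scaleC_scaleC scaleC_add_left[symmetric] by (simp add: scaleC_one)
  obtain f where f: "scaleC (1 + l) f - scaleC l (U f) = y"
    using splitting_surjective[OF mu] unfolding l_def by blast
  then have "f \<in> defect S (cnj \<mu>)"
    using defect_minus_i_scaleC[OF x] by (simp add: defect_conj_iff l_def y_def)
  moreover have "x = Gamma1 S Q f + scaleC \<i> (Gamma0 S Q f)"
    using Gamma_defect_conj[where Q = Q and \<mu> = \<mu>, OF Q0 mu \<open>f \<in> defect S (cnj \<mu>)\<close>] f x_y
    by (simp add: l_def)
  ultimately show "\<exists>f\<in>defect S (cnj \<mu>). x = Gamma1 S Q f + scaleC \<i> (Gamma0 S Q f)"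
    by blast
qed

end

theorem lemma3p1:
  fixes U :: "'a::chilbert \<Rightarrow> 'a" and W0 :: "'a set" and Q :: "'a \<Rightarrow> 'a"
  assumes "bilateral_shift U W0"
    and "unitary_between Q (defect (phillips_graph U W0) \<i>) (defect (phillips_graph U W0) (- \<i>))"
  shows "\<forall>\<mu>. Im \<mu> > 0 \<longrightarrow>
           (\<forall>x \<in> defect (phillips_graph U W0) (- \<i>). char_fun (phillips_graph U W0) Q \<mu> x = 0)"
proof -
  interpret phillips U W0 using assms(1) by unfold_locales
  show ?thesis using char_fun_eq_0[OF assms(2)] by blast
qed

end
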